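(* Let $X\subset[0,1]$. Then $$\overline{\dim}_{GB}(X)=\limsup_{m\to\infty}\frac{\log g_m(X)}{\log m},$$ where $g_m(X)=\sum_{k=1}^{m}\min\Big\{m,\ \#\big(X\cap[\tfrac{k-1}{m},\tfrac{k}{m}]\big)\Big\}$.
   Context: For $\delta>0$ and $F\subset\mathbb{R}^d$, $N_\delta(F)$ denotes the number of cubes of the standard $\delta$-grid $\{\prod_{i=1}^d[n_i\delta,(n_i+1)\delta]: n_i\in\mathbb{Z}\}$ that intersect $F$, and the upper box dimension is $\overline{\dim}_B(F)=\limsup_{\delta\to0}\frac{\log N_\delta(F)}{-\log\delta}$. $C_u(X)$ denotes the set of uniformly continuous real functions on $X$, and for $f\in C_u(X)$, $\mathrm{graph}(f)=\{(x,f(x)):x\in X\}$. The upper graph box dimension of $X$ is $\overline{\dim}_{GB}(X)=\sup_{f\in C_u(X)}\overline{\dim}_B(\mathrm{graph}(f))$. $\#A$ denotes the cardinality of $A$ (possibly infinite; $\min\{m,\infty\}=m$). *)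

theory Defs
  imports "HOL-Analysis.Analysis" "HOL-Library.Extended_Real"
begin

definition ecard :: "'a set \<Rightarrow> ereal" where
  "ecard A = (if finite A then ereal (real (card A)) else \<infinity>)"

definition eln :: "ereal \<Rightarrow> ereal" where
  "eln x = (if x \<le> 0 then -\<infinity> else if x = \<infinity> then \<infinity> else ereal (ln (real_of_ereal x)))"

definition grid_count :: "real \<Rightarrow> (real \<times> real) set \<Rightarrow> ereal" where
  "grid_count \<delta> F = ecard {(n1::int, n2::int).
      ({of_int n1 * \<delta> .. (of_int n1 + 1) * \<delta>} \<times> {of_int n2 * \<delta> .. (of_int n2 + 1) * \<delta>}) \<inter> F \<noteq> {}}"

definition upper_box_dim :: "(real \<times> real) set \<Rightarrow> ereal" where
  "upper_box_dim F = Limsup (at_right 0) (\<lambda>\<delta>. eln (grid_count \<delta> F) / ereal (- ln \<delta>))"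

definition graph_on :: "real set \<Rightarrow> (real \<Rightarrow> real) \<Rightarrow> (real \<times> real) set" where
  "graph_on X f = {(x, f x) | x. x \<in> X}"

definition upper_graph_box_dim :: "real set \<Rightarrow> ereal" where
  "upper_graph_box_dim X =
     (SUP f \<in> {f. uniformly_continuous_on X f}. upper_box_dim (graph_on X f))"

definition g_count :: "real set \<Rightarrow> nat \<Rightarrow> ereal" where
  "g_count X m = (\<Sum>k = 1..m. min (ereal (real m))
       (ecard (X \<inter> {(real k - 1) / real m .. real k / real m})))"

end

theory Submission
  imports Defs "HOL-Real_Asymp.Real_Asymp"
begin

text \<open>
  Upper bound: above a column of width \<open>1/m\<close>, the graph of a function bounded by \<open>M\<close> meets at
  most four cells of mesh \<open>\<delta>\<close> (with \<open>m = \<lfloor>1/\<delta>\<rfloor>\<close>) per point of \<open>X\<close> in the column, and at most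
  \<open>O(M m)\<close> cells altogether. Hence \<open>N\<^sub>\<delta>(graph f) \<le> C g\<^sub>m(X)\<close>.

  Lower bound: if \<open>g\<^sub>m(X) \<ge> m\<^sup>s\<close> for infinitely many \<open>m\<close>, build a uniformly convergent series
  \<open>f = \<Sum> a\<^sub>j h\<^sub>j\<close> of continuous functions stage by stage. At stage \<open>j\<close> choose such an \<open>m\<close>, much
  larger than \<open>1/a\<^sub>j\<close>; in every column select up to about \<open>a\<^sub>j m/6\<close> points of \<open>X\<close>, and let \<open>h\<^sub>j\<close>
  lift the \<open>r\<close>-th selected point of a column to height \<open>3r/m\<close> above a common base level. All later
  stages move \<open>f\<close> by less than \<open>1/(4m)\<close>, so the selected points end up in distinct cells of
  mesh \<open>1/m\<close>, and there are at least \<open>a\<^sub>j g\<^sub>m(X)/24 \<ge> m\<^bsup>s-\<epsilon>\<^esup>\<close> of them.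
\<close>

lemma continuous_extension_from_finite:
  fixes v :: "'a::{metric_space,second_countable_topology} \<Rightarrow> real"
  assumes "finite P" "\<And>p. p \<in> P \<Longrightarrow> v p \<in> {0..1}"
  obtains h where "continuous_on UNIV h" "\<And>x. h x \<in> {0..1}" "\<And>p. p \<in> P \<Longrightarrow> h p = v p"
proof -
  have "closedin (top_of_set UNIV) P"
    using assms(1) by (simp add: finite_imp_closed)
  from Tietze_closed_interval_1[OF continuous_on_finite[OF assms(1)] this zero_le_one] assms(2)
  show ?thesis using that by (metis UNIV_I cbox_interval)
qed

lemma uniformly_continuous_on_subset:
  fixes f :: "'a::metric_space \<Rightarrow> 'b::metric_space"
  assumes "uniformly_continuous_on T f" "S \<subseteq> T"
  shows "uniformly_continuous_on S f"
  using assms unfolding uniformly_continuous_on_def by (meson subsetD)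

lemma exists_finite_subset_card:
  "\<exists>B\<subseteq>A. finite B \<and> card B \<le> n \<and> (card B = n \<or> B = A)"
proof (cases "finite A \<and> card A \<le> n")
  case False
  then obtain B where "B \<subseteq> A" "finite B" "card B = n"
    using obtain_subset_with_card_n[of n A] infinite_arbitrarily_large[of A n]
    by (metis card.infinite le_cases finite_subset)
  then show ?thesis by auto
qed auto

definition capped_card :: "nat \<Rightarrow> 'a set \<Rightarrow> real" where
  "capped_card m A = (if finite A then min (real m) (real (card A)) else real m)"

lemma min_ecard_eq_capped_card: "min (ereal (real m)) (ecard A) = ereal (capped_card m A)"
  by (simp add: capped_card_def ecard_def min_def)

lemma capped_card_nonneg: "0 \<le> capped_card m A"
  by (simp add: capped_card_def)

lemma capped_card_le: "capped_card m A \<le> real m"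
  by (simp add: capped_card_def)

lemma capped_card_mono:
  assumes "A \<subseteq> B"
  shows "capped_card m A \<le> capped_card m B"
  using assms finite_subset[OF assms] card_mono[OF _ assms]
  by (cases "finite B") (auto simp: capped_card_def)

lemma capped_card_Un_le: "capped_card m (A \<union> B) \<le> capped_card m A + capped_card m B"
  using card_Un_le[of A B] by (auto simp: capped_card_def min_def)

lemma capped_card_ge_1:
  assumes "A \<noteq> {}" "1 \<le> m"
  shows "1 \<le> capped_card m A"
  using assms card_gt_0_iff[of A] by (auto simp: capped_card_def)

definition column_interval :: "nat \<Rightarrow> nat \<Rightarrow> real set" where
  "column_interval m k = {(real k - 1) / real m .. real k / real m}"

definition g_real :: "real set \<Rightarrow> nat \<Rightarrow> real" where
  "g_real X m = (\<Sum>k = 1..m. capped_card m (X \<inter> column_interval m k))"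

lemma g_count_eq_g_real: "g_count X m = ereal (g_real X m)"
  by (simp add: g_count_def g_real_def min_ecard_eq_capped_card column_interval_def)

lemma g_real_nonneg: "0 \<le> g_real X m"
  by (simp add: g_real_def sum_nonneg capped_card_nonneg)

definition column_index :: "nat \<Rightarrow> real \<Rightarrow> nat" where
  "column_index m x = min m (nat \<lfloor>real m * x\<rfloor> + 1)"

lemma column_index_mem:
  assumes "1 \<le> m" "x \<in> {0..1}"
  shows "column_index m x \<in> {1..m}" "x \<in> column_interval m (column_index m x)"
proof -
  have m: "real m > 0" using assms by simp
  show "column_index m x \<in> {1..m}" using assms by (auto simp: column_index_def)
  show "x \<in> column_interval m (column_index m x)"
  proof (cases "nat \<lfloor>real m * x\<rfloor> + 1 \<le> m")
    case True
    then have "real (column_index m x) = of_int \<lfloor>real m * x\<rfloor> + 1"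
      using assms by (simp add: column_index_def)
    moreover have "of_int \<lfloor>real m * x\<rfloor> \<le> real m * x" "real m * x < of_int \<lfloor>real m * x\<rfloor> + 1"
      by linarith+
    ultimately show ?thesis using m by (auto simp: column_interval_def field_simps)
  next
    case False
    then have "real m \<le> real m * x" using assms by linarith
    then have "x = 1" using assms m by (auto simp: mult_le_cancel_left1)
    then show ?thesis using False m by (auto simp: column_index_def column_interval_def)
  qed
qed

lemma column_index_of_mem_column:
  assumes "1 \<le> k" "k \<le> m" "x \<in> column_interval m k"
  shows "column_index m x \<in> {k, k + 1}"
proof -
  have "real k - 1 \<le> real m * x" "real m * x \<le> real k"
    using assms by (auto simp: column_interval_def field_simps)
  then have "\<lfloor>real m * x\<rfloor> = int k - 1 \<or> \<lfloor>real m * x\<rfloor> = int k"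
    by linarith
  then show ?thesis using assms by (auto simp: column_index_def)
qed

lemma g_real_ge_1:
  assumes "X \<subseteq> {0..1}" "X \<noteq> {}" "1 \<le> m"
  shows "1 \<le> g_real X m"
proof -
  obtain x where x: "x \<in> X" using assms by auto
  define k where "k = column_index m x"
  have k: "k \<in> {1..m}" "x \<in> column_interval m k"
    using column_index_mem assms x unfolding k_def by auto
  have "1 \<le> capped_card m (X \<inter> column_interval m k)"
    using k x assms by (intro capped_card_ge_1) auto
  also have "\<dots> \<le> g_real X m"
    unfolding g_real_def using k by (intro member_le_sum) (auto simp: capped_card_nonneg)
  finally show ?thesis .
qed

definition column_points :: "real set \<Rightarrow> nat \<Rightarrow> nat \<Rightarrow> real set" where
  "column_points X m k = {x \<in> X. column_index m x = k}"

lemma g_real_le_column_points: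
  assumes "1 \<le> m"
  shows "g_real X m \<le> 2 * (\<Sum>k = 1..m. capped_card m (column_points X m k))"
proof -
  define c where "c k = capped_card m (column_points X m k)" for k
  have c_nonneg: "0 \<le> c k" for k by (simp add: c_def capped_card_nonneg)
  have "capped_card m (X \<inter> column_interval m k) \<le> c k + c (Suc k)" if "k \<in> {1..m}" for k
  proof -
    have "X \<inter> column_interval m k \<subseteq> column_points X m k \<union> column_points X m (Suc k)"
      using column_index_of_mem_column[of k m] that by (auto simp: column_points_def)
    then show ?thesis unfolding c_def by (metis capped_card_mono capped_card_Un_le order.trans)
  qed
  then have "g_real X m \<le> (\<Sum>k = 1..m. c k) + (\<Sum>k = 1..m. c (Suc k))"
    unfolding g_real_def sum.distrib[symmetric] by (rule sum_mono)
  also have "(\<Sum>k = 1..m. c (Suc k)) \<le> (\<Sum>k = 1..m. c k)"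
  proof -
    have "column_points X m (Suc m) = {}"
      by (auto simp: column_points_def column_index_def)
    then have "c (Suc m) = 0" by (simp add: c_def capped_card_def)
    have "(\<Sum>k = 1..m. c (Suc k)) = (\<Sum>k = Suc 1..Suc m. c k)"
      by (rule sum.shift_bounds_cl_Suc_ivl[symmetric])
    also have "\<dots> \<le> (\<Sum>k = 1..Suc m. c k)" by (intro sum_mono2) (auto simp: c_nonneg)
    also have "\<dots> = (\<Sum>k = 1..m. c k)" using \<open>c (Suc m) = 0\<close> by simp
    finally show ?thesis .
  qed
  finally show ?thesis by (simp add: c_def)
qed

lemma eln_div_ln_le_iff:
  assumes "1 < x" "0 \<le> N"
  shows "eln N / ereal (ln x) \<le> ereal t \<longleftrightarrow> N \<le> ereal (x powr t)"
proof -
  have l: "0 < ln x" using assms by simp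
  show ?thesis
  proof (cases N)
    case (real n)
    show ?thesis
    proof (cases "n = 0")
      case False
      then have "0 < n" using assms real by simp
      have "n \<le> x powr t \<longleftrightarrow> ln n \<le> t * ln x"
        using \<open>0 < n\<close> assms by (simp add: ln_powr[symmetric] del: ln_powr)
      then show ?thesis using \<open>0 < n\<close> l real by (simp add: eln_def divide_le_eq)
    qed (use assms l real in \<open>simp add: eln_def\<close>)
  qed (use assms l in \<open>simp_all add: eln_def\<close>)
qed

lemma le_eln_div_ln_iff:
  assumes "1 < x" "0 \<le> N"
  shows "ereal t \<le> eln N / ereal (ln x) \<longleftrightarrow> ereal (x powr t) \<le> N"
proof -
  have l: "0 < ln x" using assms by simp
  show ?thesis
  proof (cases N)
    case (real n)
    show ?thesis
    proof (cases "n = 0")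
      case False
      then have "0 < n" using assms real by simp
      have "x powr t \<le> n \<longleftrightarrow> t * ln x \<le> ln n"
        using \<open>0 < n\<close> assms by (simp add: ln_powr[symmetric] del: ln_powr)
      then show ?thesis using \<open>0 < n\<close> l real by (simp add: eln_def le_divide_eq)
    qed (use assms l real in \<open>simp add: eln_def\<close>)
  qed (use assms l in \<open>simp_all add: eln_def\<close>)
qed

lemma eln_g_count_div_le_iff:
  assumes "2 \<le> m"
  shows "eln (g_count X m) / ereal (ln (real m)) \<le> ereal t \<longleftrightarrow> g_real X m \<le> real m powr t"
  using eln_div_ln_le_iff[of "real m" "g_count X m" t] assms
  by (simp add: g_count_eq_g_real g_real_nonneg)

lemma eventually_g_real_le_powr:
  assumes "Limsup sequentially (\<lambda>m. eln (g_count X m) / ereal (ln (real m))) < ereal t"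
  shows "\<forall>\<^sub>F m in sequentially. g_real X m \<le> real m powr t"
  using Limsup_lessD[OF assms] eventually_ge_at_top[of 2]
  by eventually_elim (use eln_g_count_div_le_iff in force)

lemma frequently_powr_le_g_real:
  assumes "ereal t < Limsup sequentially (\<lambda>m. eln (g_count X m) / ereal (ln (real m)))"
  shows "\<exists>\<^sub>F m in sequentially. real m powr t \<le> g_real X m"
proof (rule ccontr)
  assume "\<not> (\<exists>\<^sub>F m in sequentially. real m powr t \<le> g_real X m)"
  then have "\<forall>\<^sub>F m in sequentially. g_real X m \<le> real m powr t"
    by (auto simp: not_frequently not_le elim: eventually_mono)
  then have "\<forall>\<^sub>F m in sequentially. eln (g_count X m) / ereal (ln (real m)) \<le> ereal t"
    using eventually_ge_at_top[of 2] by eventually_elim (simp add: eln_g_count_div_le_iff)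
  from Limsup_bounded[OF this] assms show False by simp
qed

lemma Limsup_g_nonneg:
  assumes "X \<subseteq> {0..1}" "X \<noteq> {}"
  shows "0 \<le> Limsup sequentially (\<lambda>m. eln (g_count X m) / ereal (ln (real m)))"
proof (rule le_Limsup)
  show "\<forall>\<^sub>F m in sequentially. 0 \<le> eln (g_count X m) / ereal (ln (real m))"
    using eventually_ge_at_top[of 2]
  proof eventually_elim
    case (elim m)
    then show ?case
      using le_eln_div_ln_iff[of "real m" "g_count X m" 0] g_real_ge_1[OF assms, of m]
      by (simp add: g_count_eq_g_real g_real_nonneg zero_ereal_def)
  qed
qed simp

definition grid_cell :: "real \<Rightarrow> int \<Rightarrow> int \<Rightarrow> (real \<times> real) set" where
  "grid_cell \<delta> n1 n2 =
     {of_int n1 * \<delta> .. (of_int n1 + 1) * \<delta>} \<times> {of_int n2 * \<delta> .. (of_int n2 + 1) * \<delta>}"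

definition grid_cells :: "real \<Rightarrow> (real \<times> real) set \<Rightarrow> (int \<times> int) set" where
  "grid_cells \<delta> F = {(n1, n2). grid_cell \<delta> n1 n2 \<inter> F \<noteq> {}}"

lemma grid_count_eq_ecard: "grid_count \<delta> F = ecard (grid_cells \<delta> F)"
  by (simp add: grid_count_def grid_cells_def grid_cell_def)

lemma mem_grid_cells_graph_iff:
  "(n1, n2) \<in> grid_cells \<delta> (graph_on A f) \<longleftrightarrow> (\<exists>x\<in>A. (x, f x) \<in> grid_cell \<delta> n1 n2)"
  by (auto simp: grid_cells_def graph_on_def)

lemma mem_grid_cell_floor:
  assumes "0 < \<delta>"
  shows "(x, y) \<in> grid_cell \<delta> \<lfloor>x / \<delta>\<rfloor> \<lfloor>y / \<delta>\<rfloor>"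
proof -
  have "of_int \<lfloor>z / \<delta>\<rfloor> * \<delta> \<le> z \<and> z \<le> (of_int \<lfloor>z / \<delta>\<rfloor> + 1) * \<delta>" for z
    using assms floor_divide_lower[OF assms, of z] floor_divide_upper[OF assms, of z] by simp
  then show ?thesis by (simp add: grid_cell_def)
qed

lemma mem_grid_cell_imp_floor:
  assumes "0 < \<delta>" "(x, y) \<in> grid_cell \<delta> n1 n2"
  shows "n1 \<in> {\<lfloor>x / \<delta>\<rfloor> - 1, \<lfloor>x / \<delta>\<rfloor>}" "n2 \<in> {\<lfloor>y / \<delta>\<rfloor> - 1, \<lfloor>y / \<delta>\<rfloor>}"
proof -
  have "of_int n1 \<le> x / \<delta>" "x / \<delta> \<le> of_int n1 + 1" "of_int n2 \<le> y / \<delta>" "y / \<delta> \<le> of_int n2 + 1"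
    using assms by (auto simp: grid_cell_def field_simps)
  then have "n1 \<le> \<lfloor>x / \<delta>\<rfloor>" "\<lfloor>x / \<delta>\<rfloor> \<le> n1 + 1" "n2 \<le> \<lfloor>y / \<delta>\<rfloor>" "\<lfloor>y / \<delta>\<rfloor> \<le> n2 + 1"
    by (simp_all add: le_floor_iff floor_le_iff)
  then show "n1 \<in> {\<lfloor>x / \<delta>\<rfloor> - 1, \<lfloor>x / \<delta>\<rfloor>}" "n2 \<in> {\<lfloor>y / \<delta>\<rfloor> - 1, \<lfloor>y / \<delta>\<rfloor>}"
    by auto
qed

lemma card_grid_cells_graph_le:
  assumes "0 < \<delta>" "finite A"
  shows "finite (grid_cells \<delta> (graph_on A f))" "card (grid_cells \<delta> (graph_on A f)) \<le> 4 * card A"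
proof -
  define Q where "Q x = {\<lfloor>x / \<delta>\<rfloor> - 1, \<lfloor>x / \<delta>\<rfloor>} \<times> {\<lfloor>f x / \<delta>\<rfloor> - 1, \<lfloor>f x / \<delta>\<rfloor>}" for x
  have sub: "grid_cells \<delta> (graph_on A f) \<subseteq> (\<Union>x\<in>A. Q x)"
    using mem_grid_cell_imp_floor[OF assms(1)]
    by (fastforce simp: mem_grid_cells_graph_iff Q_def)
  have card_Q: "card (Q x) \<le> 4" for x
  proof -
    have "card {u - 1, u} \<le> 2" for u :: int by (simp add: card_insert_le_m1)
    from mult_le_mono[OF this this] show ?thesis unfolding Q_def card_cartesian_product by simp
  qed
  have "finite (\<Union>x\<in>A. Q x)" using assms by (simp add: Q_def)
  then show "finite (grid_cells \<delta> (graph_on A f))" using sub finite_subset by blast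
  have "card (grid_cells \<delta> (graph_on A f)) \<le> card (\<Union>x\<in>A. Q x)"
    using sub \<open>finite (\<Union>x\<in>A. Q x)\<close> by (rule card_mono[rotated])
  also have "\<dots> \<le> (\<Sum>x\<in>A. card (Q x))" by (rule card_UN_le[OF assms(2)])
  also have "\<dots> \<le> 4 * card A" using sum_mono[of A "\<lambda>x. card (Q x)" "\<lambda>_. 4"] card_Q by simp
  finally show "card (grid_cells \<delta> (graph_on A f)) \<le> 4 * card A" .
qed

lemma card_int_cells_meeting_interval:
  assumes "0 < \<delta>" "a \<le> b"
  shows "finite {n::int. a \<le> (of_int n + 1) * \<delta> \<and> of_int n * \<delta> \<le> b}"
    "real (card {n::int. a \<le> (of_int n + 1) * \<delta> \<and> of_int n * \<delta> \<le> b}) \<le> (b - a) / \<delta> + 2"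
proof -
  let ?S = "{n::int. a \<le> (of_int n + 1) * \<delta> \<and> of_int n * \<delta> \<le> b}"
  have sub: "?S \<subseteq> {\<lceil>a / \<delta>\<rceil> - 1 .. \<lfloor>b / \<delta>\<rfloor>}"
    using assms by (auto simp: ceiling_le_iff le_floor_iff field_simps)
  then show "finite ?S" using finite_subset by blast
  have "card ?S \<le> nat (\<lfloor>b / \<delta>\<rfloor> - \<lceil>a / \<delta>\<rceil> + 2)"
    using card_mono[OF _ sub] by simp
  moreover have "a / \<delta> \<le> b / \<delta>" using assms by (simp add: divide_right_mono)
  ultimately have "real (card ?S) \<le> b / \<delta> - a / \<delta> + 2" by linarith
  then show "real (card ?S) \<le> (b - a) / \<delta> + 2" by (simp add: diff_divide_distrib)
qed

lemma eventually_le_inverse_powr: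
  fixes D e :: real
  assumes "0 < e"
  shows "\<forall>\<^sub>F \<delta> in at_right 0. D \<le> (1 / \<delta>) powr e"
proof -
  have "filterlim (\<lambda>\<delta>. (1 / \<delta>) powr e) at_top (at_right (0::real))"
    using assms by real_asymp
  then show ?thesis by (simp add: filterlim_at_top)
qed

lemma filterlim_nat_floor_inverse: "filterlim (\<lambda>\<delta>. nat \<lfloor>1 / \<delta>\<rfloor>) sequentially (at_right (0::real))"
  using filterlim_compose[OF filterlim_nat_sequentially
      filterlim_compose[OF filterlim_floor_sequentially filterlim_inverse_at_top_right]]
  by (simp add: inverse_eq_divide)

lemma upper_box_dim_le_of_grid_count_le:
  assumes "\<forall>\<^sub>F \<delta> in at_right 0. grid_count \<delta> F \<le> ereal (D * (1 / \<delta>) powr s)"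
  shows "upper_box_dim F \<le> ereal s"
proof (rule dense_ge)
  fix y assume "ereal s < y"
  then obtain t where t: "s < t" "ereal t < y"
    using ereal_dense2 less_ereal.simps(1) order.strict_trans by metis
  have small: "\<forall>\<^sub>F \<delta> in at_right 0. 0 < \<delta> \<and> \<delta> < (1::real)"
    by (simp add: eventually_at_right_field) (use zero_less_one in blast)
  have large: "\<forall>\<^sub>F \<delta> in at_right 0. D \<le> (1 / \<delta>) powr (t - s)"
    using \<open>s < t\<close> by (intro eventually_le_inverse_powr) simp
  have "\<forall>\<^sub>F \<delta> in at_right 0. eln (grid_count \<delta> F) / ereal (- ln \<delta>) \<le> ereal t"
    using assms large small
  proof eventually_elim
    case (elim \<delta>)
    then have "D * (1 / \<delta>) powr s \<le> (1 / \<delta>) powr (t - s) * (1 / \<delta>) powr s"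
      by (intro mult_right_mono) auto
    then have "grid_count \<delta> F \<le> ereal ((1 / \<delta>) powr t)"
      using elim(1) by (simp add: powr_add[symmetric] order.trans)
    moreover have "- ln \<delta> = ln (1 / \<delta>)" "1 < 1 / \<delta>" using elim by (auto simp: ln_div)
    ultimately show ?case
      using eln_div_ln_le_iff[of "1 / \<delta>" "grid_count \<delta> F" t]
      by (simp add: grid_count_def ecard_def)
  qed
  then have "upper_box_dim F \<le> ereal t"
    unfolding upper_box_dim_def by (rule Limsup_bounded)
  then show "upper_box_dim F \<le> y" using t by simp
qed

lemma nat_floor_inverse_bounds:
  assumes "0 < \<delta>" "\<delta> \<le> 1 / 2"
  shows "2 \<le> nat \<lfloor>1 / \<delta>\<rfloor>" "real (nat \<lfloor>1 / \<delta>\<rfloor>) \<le> 1 / \<delta>" "1 / 2 \<le> real (nat \<lfloor>1 / \<delta>\<rfloor>) * \<delta>"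
proof -
  have "2 \<le> 1 / \<delta>" using assms by (simp add: field_simps)
  have "0 \<le> \<lfloor>1 / \<delta>\<rfloor>" using assms by simp
  then have m: "real (nat \<lfloor>1 / \<delta>\<rfloor>) = of_int \<lfloor>1 / \<delta>\<rfloor>" by (rule of_nat_nat)
  show "2 \<le> nat \<lfloor>1 / \<delta>\<rfloor>" "real (nat \<lfloor>1 / \<delta>\<rfloor>) \<le> 1 / \<delta>"
    using \<open>2 \<le> 1 / \<delta>\<close> unfolding m by linarith+
  have "1 - \<delta> < real (nat \<lfloor>1 / \<delta>\<rfloor>) * \<delta>"
    using floor_divide_upper[OF assms(1), of 1] assms unfolding m by (simp add: algebra_simps)
  then show "1 / 2 \<le> real (nat \<lfloor>1 / \<delta>\<rfloor>) * \<delta>" using assms by linarith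
qed

lemma card_grid_cells_graph_column_le_resolution:
  assumes "\<forall>x\<in>A. \<bar>f x\<bar> \<le> M" "0 \<le> M" "0 < \<delta>" "\<delta> \<le> 1 / 2" "m = nat \<lfloor>1 / \<delta>\<rfloor>"
    and "A \<subseteq> column_interval m k"
  shows "finite (grid_cells \<delta> (graph_on A f))"
    "real (card (grid_cells \<delta> (graph_on A f))) \<le> 4 * (4 * M + 2) * real m"
proof -
  note m = nat_floor_inverse_bounds[OF assms(3,4), folded assms(5)]
  define B where "B = {n::int. (real k - 1) / real m \<le> (of_int n + 1) * \<delta> \<and> of_int n * \<delta> \<le> real k / real m}"
  define R where "R = {n::int. - M \<le> (of_int n + 1) * \<delta> \<and> of_int n * \<delta> \<le> M}"
  have sub: "grid_cells \<delta> (graph_on A f) \<subseteq> B \<times> R"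
  proof clarify
    fix n1 n2 assume "(n1, n2) \<in> grid_cells \<delta> (graph_on A f)"
    then obtain x where x: "x \<in> A" "(x, f x) \<in> grid_cell \<delta> n1 n2"
      by (auto simp: mem_grid_cells_graph_iff)
    then have "x \<in> column_interval m k" "\<bar>f x\<bar> \<le> M" using assms by auto
    with x(2) show "n1 \<in> B \<and> n2 \<in> R"
      unfolding B_def R_def grid_cell_def column_interval_def by auto
  qed
  have "(real k - 1) / real m \<le> real k / real m" by (simp add: divide_right_mono)
  from card_int_cells_meeting_interval[OF assms(3) this]
  have fin_B: "finite B" and "real (card B) \<le> (1 / real m) / \<delta> + 2"
    unfolding B_def by (simp_all add: diff_divide_distrib[symmetric])
  moreover have "(1 / real m) / \<delta> \<le> 2" using m assms by (simp add: field_simps)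
  ultimately have card_B: "real (card B) \<le> 4" by linarith
  have "- M \<le> M" using assms by simp
  from card_int_cells_meeting_interval[OF assms(3) this]
  have fin_R: "finite R" and "real (card R) \<le> 2 * M * (1 / \<delta>) + 2"
    unfolding R_def by simp_all
  moreover have "2 * M * (1 / \<delta>) \<le> 2 * M * (2 * real m)"
    using m assms by (intro mult_left_mono) (auto simp: field_simps)
  moreover have "2 \<le> 2 * real m" using m by simp
  ultimately have card_R: "real (card R) \<le> (4 * M + 2) * real m" by (simp add: algebra_simps)
  show "finite (grid_cells \<delta> (graph_on A f))"
    using sub fin_B fin_R finite_subset by blast
  have "real (card (grid_cells \<delta> (graph_on A f))) \<le> real (card B) * real (card R)"
    using card_mono[OF _ sub] fin_B fin_R by (simp add: card_cartesian_product flip: of_nat_mult)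
  also have "\<dots> \<le> 4 * ((4 * M + 2) * real m)"
    using card_B card_R by (intro mult_mono) auto
  finally show "real (card (grid_cells \<delta> (graph_on A f))) \<le> 4 * (4 * M + 2) * real m"
    by (simp only: mult.assoc)
qed

lemma card_grid_cells_graph_column_le:
  assumes "\<forall>x\<in>A. \<bar>f x\<bar> \<le> M" "0 \<le> M" "0 < \<delta>" "\<delta> \<le> 1 / 2" "m = nat \<lfloor>1 / \<delta>\<rfloor>"
    and "A \<subseteq> column_interval m k"
  shows "finite (grid_cells \<delta> (graph_on A f))"
    "real (card (grid_cells \<delta> (graph_on A f))) \<le> 4 * (4 * M + 2) * capped_card m A"
proof -
  note column_bound = card_grid_cells_graph_column_le_resolution[OF assms]
  show "finite (grid_cells \<delta> (graph_on A f))" by (rule column_bound(1))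
  show "real (card (grid_cells \<delta> (graph_on A f))) \<le> 4 * (4 * M + 2) * capped_card m A"
  proof (cases "finite A \<and> card A \<le> m")
    case True
    then have "real (card (grid_cells \<delta> (graph_on A f))) \<le> 4 * real (card A)"
      using card_grid_cells_graph_le[OF assms(3)] by (metis of_nat_le_iff of_nat_mult of_nat_numeral)
    also have "\<dots> \<le> 4 * (4 * M + 2) * real (card A)"
      using assms by (intro mult_right_mono) auto
    finally show ?thesis using True by (simp add: capped_card_def)
  next
    case False
    then show ?thesis using column_bound(2) by (auto simp: capped_card_def)
  qed
qed

lemma graph_on_Un_columns:
  assumes "A \<subseteq> {0..1}" "1 \<le> m"
  shows "graph_on A f = (\<Union>k\<in>{1..m}. graph_on (A \<inter> column_interval m k) f)"
proof (intro equalityI subsetI)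
  fix p assume "p \<in> graph_on A f"
  then obtain x where "x \<in> A" "p = (x, f x)" by (auto simp: graph_on_def)
  moreover have "x \<in> {0..1}" using \<open>x \<in> A\<close> assms(1) by auto
  ultimately show "p \<in> (\<Union>k\<in>{1..m}. graph_on (A \<inter> column_interval m k) f)"
    using column_index_mem[OF assms(2)] unfolding graph_on_def by blast
qed (auto simp: graph_on_def)

lemma grid_cells_UN: "grid_cells \<delta> (\<Union>i\<in>I. F i) = (\<Union>i\<in>I. grid_cells \<delta> (F i))"
  by (auto simp: grid_cells_def)

lemma grid_count_graph_le_g_real:
  assumes "X \<subseteq> {0..1}" "\<forall>x\<in>X. \<bar>f x\<bar> \<le> M" "0 \<le> M" "0 < \<delta>" "\<delta> \<le> 1 / 2"
  shows "grid_count \<delta> (graph_on X f) \<le> ereal (4 * (4 * M + 2) * g_real X (nat \<lfloor>1 / \<delta>\<rfloor>))"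
proof -
  define m where "m = nat \<lfloor>1 / \<delta>\<rfloor>"
  define T where "T k = grid_cells \<delta> (graph_on (X \<inter> column_interval m k) f)" for k
  note column_bound = card_grid_cells_graph_column_le[of "X \<inter> column_interval m k" f M \<delta> m k for k]
  have "1 \<le> m" using nat_floor_inverse_bounds[OF assms(4,5)] by (simp add: m_def)
  then have cells: "grid_cells \<delta> (graph_on X f) = (\<Union>k\<in>{1..m}. T k)"
    by (simp add: T_def graph_on_Un_columns[OF assms(1)] grid_cells_UN)
  have fin_T: "finite (T k)" for k using column_bound assms by (simp add: T_def m_def)
  have "real (card (\<Union>k\<in>{1..m}. T k)) \<le> (\<Sum>k\<in>{1..m}. real (card (T k)))"
    using card_UN_le[of "{1..m}" T] by (simp flip: of_nat_sum)
  also have "\<dots> \<le> (\<Sum>k\<in>{1..m}. 4 * (4 * M + 2) * capped_card m (X \<inter> column_interval m k))"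
    using column_bound assms by (intro sum_mono) (simp add: T_def m_def)
  also have "\<dots> = 4 * (4 * M + 2) * g_real X m" by (simp add: g_real_def sum_distrib_left)
  finally show ?thesis
    unfolding grid_count_eq_ecard ecard_def cells m_def[symmetric] using fin_T by simp
qed

lemma upper_box_dim_empty: "upper_box_dim {} = -\<infinity>"
proof -
  have "grid_count \<delta> {} = 0" for \<delta>
    by (simp add: grid_count_def ecard_def grid_cell_def)
  moreover have "\<forall>\<^sub>F \<delta> in at_right 0. ln \<delta> \<le> (0::real)"
    unfolding eventually_at_right_field by (intro exI[of _ 1]) auto
  ultimately have "\<forall>\<^sub>F \<delta> in at_right 0. eln (grid_count \<delta> {}) / ereal (- ln \<delta>) \<le> -\<infinity>"
    by (auto simp: eln_def elim: eventually_mono)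
  from Limsup_bounded[OF this] show ?thesis by (simp add: upper_box_dim_def)
qed

lemma upper_box_dim_graph_le_Limsup_g:
  assumes X: "X \<subseteq> {0..1}" and f: "uniformly_continuous_on X f"
  shows "upper_box_dim (graph_on X f) \<le> Limsup sequentially (\<lambda>m. eln (g_count X m) / ereal (ln (real m)))"
    (is "_ \<le> ?L")
proof (cases "X = {}")
  case True
  then show ?thesis by (simp add: graph_on_def upper_box_dim_empty)
next
  case False
  have "bounded (f ` X)"
    using bounded_uniformly_continuous_image[OF f] bounded_subset[OF bounded_closed_interval X] by blast
  then obtain M where M: "\<forall>x\<in>X. \<bar>f x\<bar> \<le> M" "0 \<le> M"
    unfolding bounded_iff by (metis abs_ge_zero image_eqI order.trans real_norm_def)
  show ?thesis
  proof (rule dense_ge)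
    fix y assume "?L < y"
    then obtain t where t: "?L < ereal t" "ereal t < y"
      using ereal_dense2 by blast
    from Limsup_g_nonneg[OF X False] t(1) have "0 < ereal t" by (rule order.strict_trans1)
    then have "0 \<le> t" by simp
    have "\<forall>\<^sub>F \<delta> in at_right (0::real). g_real X (nat \<lfloor>1 / \<delta>\<rfloor>) \<le> real (nat \<lfloor>1 / \<delta>\<rfloor>) powr t"
      using eventually_compose_filterlim[OF eventually_g_real_le_powr[OF t(1)]
            filterlim_nat_floor_inverse] by simp
    moreover have "\<forall>\<^sub>F \<delta> in at_right 0. 0 < \<delta> \<and> \<delta> \<le> (1 / 2 :: real)"
      unfolding eventually_at_right_field by (intro exI[of _ "1 / 2"]) auto
    ultimately have "\<forall>\<^sub>F \<delta> in at_right 0.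
        grid_count \<delta> (graph_on X f) \<le> ereal (4 * (4 * M + 2) * (1 / \<delta>) powr t)"
    proof eventually_elim
      case (elim \<delta>)
      have "real (nat \<lfloor>1 / \<delta>\<rfloor>) powr t \<le> (1 / \<delta>) powr t"
        using nat_floor_inverse_bounds[of \<delta>] elim \<open>0 \<le> t\<close> by (intro powr_mono2) auto
      with elim have "4 * (4 * M + 2) * g_real X (nat \<lfloor>1 / \<delta>\<rfloor>) \<le> 4 * (4 * M + 2) * (1 / \<delta>) powr t"
        using M by (intro mult_left_mono) auto
      then show ?case
        using grid_count_graph_le_g_real[OF X M, of \<delta>] elim by (auto elim: order_trans)
    qed
    then have "upper_box_dim (graph_on X f) \<le> ereal t"
      by (rule upper_box_dim_le_of_grid_count_le)
    then show "upper_box_dim (graph_on X f) \<le> y" using t(2) by simp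
  qed
qed

locale graph_construction =
  fixes X :: "real set" and s \<epsilon> :: real
  assumes X_subset: "X \<subseteq> {0..1}" and \<epsilon>_pos: "0 < \<epsilon>"
    and frequently_g_real_ge: "\<exists>\<^sub>F m in sequentially. real m powr s \<le> g_real X m"
begin

definition quota :: "real \<Rightarrow> nat \<Rightarrow> nat" where
  "quota a m = nat \<lfloor>a * real m / 6\<rfloor>"

definition selected :: "real \<Rightarrow> nat \<Rightarrow> nat \<Rightarrow> real set" where
  "selected a m k = (SOME B. B \<subseteq> column_points X m k \<and> finite B \<and> card B \<le> quota a m \<and>
     (card B = quota a m \<or> B = column_points X m k))"

definition selected_points :: "real \<Rightarrow> nat \<Rightarrow> real set" where
  "selected_points a m = (\<Union>k\<in>{1..m}. selected a m k)"

definition slot :: "real \<Rightarrow> nat \<Rightarrow> real \<Rightarrow> nat" where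
  "slot a m p = card {q \<in> selected a m (column_index m p). q \<le> p}"

text \<open>The offset \<open>a/4\<close> absorbs the oscillation of \<open>F\<close> on a column; consecutive slots are \<open>3/m\<close>
  apart, which survives a later perturbation of size \<open>1/(4m)\<close>.\<close>
definition target :: "(real \<Rightarrow> real) \<Rightarrow> real \<Rightarrow> nat \<Rightarrow> real \<Rightarrow> real" where
  "target F a m p = F ((real (column_index m p) - 1) / real m) + a / 4 + 3 * real (slot a m p) / real m"

text \<open>\<open>12 \<le> a m\<close> makes a full quota at least \<open>a/12\<close> of a full column, and
  \<open>24/a \<le> m\<^sup>\<epsilon>\<close> absorbs the resulting loss factor \<open>a/24\<close> in the count of selected points.\<close>
definition admissible :: "(real \<Rightarrow> real) \<Rightarrow> real \<Rightarrow> nat \<Rightarrow> bool" where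
  "admissible F a m \<longleftrightarrow> 2 \<le> m \<and> 12 \<le> a * real m \<and> 24 / a \<le> real m powr \<epsilon> \<and>
     real m powr s \<le> g_real X m \<and>
     (\<forall>x\<in>{0..1}. \<forall>y\<in>{0..1}. \<bar>x - y\<bar> \<le> 1 / real m \<longrightarrow> \<bar>F x - F y\<bar> \<le> a / 4)"

lemma selected_spec:
  "selected a m k \<subseteq> column_points X m k" "finite (selected a m k)" "card (selected a m k) \<le> quota a m"
  "card (selected a m k) = quota a m \<or> selected a m k = column_points X m k"
  using someI_ex[OF exists_finite_subset_card[of "column_points X m k" "quota a m"]]
  unfolding selected_def by blast+

lemma mem_selected:
  assumes "p \<in> selected a m k"
  shows "p \<in> X" "column_index m p = k"
  using assms selected_spec(1) by (auto simp: column_points_def)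

lemma mem_selected_points:
  assumes "p \<in> selected_points a m"
  shows "p \<in> X" "column_index m p \<in> {1..m}" "p \<in> selected a m (column_index m p)"
  using assms mem_selected by (auto simp: selected_points_def)

lemma finite_selected_points: "finite (selected_points a m)"
  by (simp add: selected_points_def selected_spec)

lemma card_selected_points:
  "card (selected_points a m) = (\<Sum>k = 1..m. card (selected a m k))"
  unfolding selected_points_def
  using mem_selected(2) by (intro card_UN_disjoint) (auto simp: selected_spec, metis)

lemma slot_le_quota: "slot a m p \<le> quota a m"
  unfolding slot_def
  by (rule order.trans[OF card_mono selected_spec(3)]) (auto simp: selected_spec)

lemma slot_strict_mono:
  assumes "q \<in> selected a m (column_index m p)" "p < q"
  shows "slot a m p < slot a m q"
proof -
  have "column_index m q = column_index m p"
    using mem_selected(2)[OF assms(1)] .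
  moreover have "q \<in> {r \<in> selected a m (column_index m p). r \<le> q}"
    "q \<notin> {r \<in> selected a m (column_index m p). r \<le> p}"
    using assms by auto
  moreover have "{r \<in> selected a m (column_index m p). r \<le> p}
      \<subseteq> {r \<in> selected a m (column_index m p). r \<le> q}"
    using assms(2) by auto
  ultimately show ?thesis
    unfolding slot_def by (intro psubset_card_mono) (auto simp: selected_spec)
qed

lemma quota_bounds:
  assumes "0 < a"
  shows "real (quota a m) \<le> a * real m / 6" "a * real m / 6 - 1 < real (quota a m)"
proof -
  have "real (quota a m) = of_int \<lfloor>a * real m / 6\<rfloor>"
    using assms by (simp add: quota_def)
  then show "real (quota a m) \<le> a * real m / 6" "a * real m / 6 - 1 < real (quota a m)"
    by linarith+
qed

lemma target_minus_bounds:
  assumes adm: "admissible F a m" and "0 < a" and p: "p \<in> selected_points a m"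
  shows "0 \<le> target F a m p - F p" "target F a m p - F p \<le> a"
proof -
  define r where "r = (real (column_index m p) - 1) / real m"
  have "2 \<le> m" using adm by (simp add: admissible_def)
  have p01: "p \<in> {0..1}" using mem_selected_points(1)[OF p] X_subset by auto
  have k: "column_index m p \<in> {1..m}" "p \<in> column_interval m (column_index m p)"
    using column_index_mem[OF _ p01] \<open>2 \<le> m\<close> by auto
  then have "r \<in> {0..1}" "\<bar>r - p\<bar> \<le> 1 / real m"
    by (auto simp: r_def column_interval_def field_simps)
  then have F_close: "\<bar>F r - F p\<bar> \<le> a / 4"
    using adm p01 by (simp add: admissible_def)
  have "3 * real (slot a m p) / real m \<le> 3 * (a * real m / 6) / real m"
    using slot_le_quota[of a m p] quota_bounds(1)[OF \<open>0 < a\<close>, of m]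
    by (intro divide_right_mono mult_left_mono) auto
  also have "\<dots> = a / 2" using \<open>2 \<le> m\<close> by simp
  finally have "3 * real (slot a m p) / real m \<le> a / 2" .
  moreover have "0 \<le> 3 * real (slot a m p) / real m" by simp
  ultimately show "0 \<le> target F a m p - F p" "target F a m p - F p \<le> a"
    using F_close unfolding target_def r_def[symmetric] abs_le_iff by linarith+
qed

lemma exists_admissible:
  assumes F: "continuous_on {0..1} F" and "0 < a"
  shows "\<exists>m. admissible F a m"
proof -
  obtain d where d: "0 < d" "\<forall>x\<in>{0..1}. \<forall>y\<in>{0..1}. dist y x < d \<longrightarrow> dist (F y) (F x) < a / 4"
    using compact_uniformly_continuous[OF F compact_Icc] \<open>0 < a\<close>
    unfolding uniformly_continuous_on_def by (metis zero_less_divide_iff zero_less_numeral)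
  have "filterlim (\<lambda>m. real m powr \<epsilon>) at_top sequentially"
    using \<epsilon>_pos by real_asymp
  then have "\<forall>\<^sub>F m in sequentially. 24 / a \<le> real m powr \<epsilon>"
    by (simp add: filterlim_at_top)
  moreover have "\<forall>\<^sub>F m in sequentially. max 2 (max (12 / a) (2 / d)) \<le> real m"
    using filterlim_real_sequentially by (simp only: filterlim_at_top)
  ultimately have "\<forall>\<^sub>F m in sequentially.
      2 \<le> m \<and> 12 / a \<le> real m \<and> 2 / d \<le> real m \<and> 24 / a \<le> real m powr \<epsilon>"
    by eventually_elim simp
  from frequently_eventually_conj[OF frequently_g_real_ge this]
  obtain m where m: "2 \<le> m" "12 / a \<le> real m" "2 / d \<le> real m" "24 / a \<le> real m powr \<epsilon>"
    "real m powr s \<le> g_real X m"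
    by (auto dest: frequently_ex)
  have "\<bar>F x - F y\<bar> \<le> a / 4" if "x \<in> {0..1}" "y \<in> {0..1}" "\<bar>x - y\<bar> \<le> 1 / real m" for x y
  proof -
    have "1 / real m < d" using m(1,3) d(1) by (simp add: field_simps)
    then have "dist x y < d" using that(3) by (simp add: dist_real_def)
    then show ?thesis using d(2) that(1,2) by (fastforce simp: dist_real_def)
  qed
  then have "admissible F a m"
    using m \<open>0 < a\<close> by (simp add: admissible_def field_simps)
  then show ?thesis ..
qed

lemma capped_card_le_card_selected:
  assumes "0 < a" "a \<le> 1" "12 \<le> a * real m"
  shows "a / 12 * capped_card m (column_points X m k) \<le> real (card (selected a m k))"
  using selected_spec(4)
proof
  assume "card (selected a m k) = quota a m"
  have "a / 12 * capped_card m (column_points X m k) \<le> a / 12 * real m"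
    using assms capped_card_le by (intro mult_left_mono) auto
  also have "\<dots> \<le> a * real m / 6 - 1" using assms by simp
  also have "\<dots> \<le> real (quota a m)" using quota_bounds(2)[OF assms(1), of m] by simp
  finally show ?thesis using \<open>card (selected a m k) = quota a m\<close> by simp
next
  assume eq: "selected a m k = column_points X m k"
  have "a / 12 * capped_card m (column_points X m k) \<le> capped_card m (column_points X m k)"
    using assms capped_card_nonneg by (intro mult_left_le_one_le) auto
  also have "\<dots> \<le> real (card (selected a m k))"
    using selected_spec(2)[of a m k] unfolding eq by (simp add: capped_card_def)
  finally show ?thesis .
qed

lemma powr_le_card_selected_points:
  assumes adm: "admissible F a m" and a: "0 < a" "a \<le> 1"
  shows "real m powr (s - \<epsilon>) \<le> real (card (selected_points a m))"
proof -
  have m: "2 \<le> m" "12 \<le> a * real m" "24 / a \<le> real m powr \<epsilon>" "real m powr s \<le> g_real X m"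
    using adm by (auto simp: admissible_def)
  have "real m powr (s - \<epsilon>) = real m powr s / real m powr \<epsilon>" by (simp add: powr_diff)
  also have "\<dots> \<le> real m powr s * (a / 24)"
    using m(3) a by (simp add: divide_le_eq field_simps mult_left_mono)
  also have "\<dots> \<le> g_real X m * (a / 24)" using m(4) a by (intro mult_right_mono) auto
  also have "\<dots> \<le> 2 * (\<Sum>k = 1..m. capped_card m (column_points X m k)) * (a / 24)"
    using g_real_le_column_points[of m X] m(1) a by (intro mult_right_mono) auto
  also have "\<dots> = (\<Sum>k = 1..m. a / 12 * capped_card m (column_points X m k))"
    by (simp add: sum_distrib_left sum_distrib_right mult_ac)
  also have "\<dots> \<le> (\<Sum>k = 1..m. real (card (selected a m k)))"
    using capped_card_le_card_selected[OF a m(2)] by (intro sum_mono)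
  also have "\<dots> = real (card (selected_points a m))" by (simp add: card_selected_points)
  finally show ?thesis .
qed

lemma near_targets_in_distinct_rows:
  assumes adm: "admissible F a m"
    and near: "\<And>p. p \<in> selected_points a m \<Longrightarrow> target F a m p \<le> f p \<and> f p \<le> target F a m p + 1 / (4 * real m)"
    and pq: "p \<in> selected_points a m" "q \<in> selected_points a m" "p < q"
    and same_column: "\<lfloor>real m * p\<rfloor> = \<lfloor>real m * q\<rfloor>"
  shows "\<lfloor>real m * f p\<rfloor> \<noteq> \<lfloor>real m * f q\<rfloor>"
proof -
  have "2 \<le> m" using adm by (simp add: admissible_def)
  then have m: "0 < real m" by simp
  have col: "column_index m q = column_index m p"
    using same_column by (simp add: column_index_def)
  then have "slot a m p < slot a m q"
    using mem_selected_points(3)[OF pq(2)] pq(3) by (intro slot_strict_mono) simp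
  then have "3 / real m \<le> 3 * real (slot a m q) / real m - 3 * real (slot a m p) / real m"
    using m by (simp add: diff_divide_distrib[symmetric] divide_right_mono)
  then have "3 / real m \<le> target F a m q - target F a m p"
    by (simp add: target_def col)
  then have "3 / real m - 1 / (4 * real m) \<le> f q - f p"
    using near[OF pq(1)] near[OF pq(2)] by linarith
  then have "1 \<le> real m * f q - real m * f p"
    using m by (simp add: field_simps)
  then show ?thesis by linarith
qed

lemma powr_le_grid_count:
  assumes adm: "admissible F a m" and a: "0 < a" "a \<le> 1"
    and near: "\<And>p. p \<in> selected_points a m \<Longrightarrow> target F a m p \<le> f p \<and> f p \<le> target F a m p + 1 / (4 * real m)"
  shows "ereal (real m powr (s - \<epsilon>)) \<le> grid_count (1 / real m) (graph_on X f)"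
proof -
  have "0 < real m" using adm by (simp add: admissible_def)
  define cell where "cell p = (\<lfloor>real m * p\<rfloor>, \<lfloor>real m * f p\<rfloor>)" for p
  have cell_mem: "cell p \<in> grid_cells (1 / real m) (graph_on X f)" if "p \<in> X" for p
    using mem_grid_cell_floor[of "1 / real m" p "f p"] \<open>0 < real m\<close> that
    by (auto simp: cell_def mem_grid_cells_graph_iff mult.commute)
  have "cell p \<noteq> cell q" if "p \<in> selected_points a m" "q \<in> selected_points a m" "p < q" for p q
    using near_targets_in_distinct_rows[OF adm near that] by (auto simp: cell_def)
  then have "inj_on cell (selected_points a m)"
    by (intro inj_onI) (metis linorder_neqE_linordered_idom)
  then have "card (selected_points a m) \<le> card (grid_cells (1 / real m) (graph_on X f))"
    if "finite (grid_cells (1 / real m) (graph_on X f))"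
    using cell_mem mem_selected_points(1) that
    by (intro card_inj_on_le) auto
  then show ?thesis
    using powr_le_card_selected_points[OF adm a]
    by (auto simp: grid_count_eq_ecard ecard_def)
qed

definition stage_resolution :: "(real \<Rightarrow> real) \<Rightarrow> real \<Rightarrow> nat" where
  "stage_resolution F a = (SOME m. admissible F a m)"

definition stage_bump :: "(real \<Rightarrow> real) \<Rightarrow> real \<Rightarrow> real \<Rightarrow> real" where
  "stage_bump F a = (SOME h. continuous_on UNIV h \<and> (\<forall>x. h x \<in> {0..1}) \<and>
     (\<forall>p\<in>selected_points a (stage_resolution F a). a * h p = target F a (stage_resolution F a) p - F p))"

lemma stage_resolution_bump:
  assumes "continuous_on UNIV F" "0 < a"
  shows "admissible F a (stage_resolution F a)" "continuous_on UNIV (stage_bump F a)"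
    "stage_bump F a x \<in> {0..1}"
    "p \<in> selected_points a (stage_resolution F a) \<Longrightarrow>
       a * stage_bump F a p = target F a (stage_resolution F a) p - F p"
proof -
  show adm: "admissible F a (stage_resolution F a)"
    unfolding stage_resolution_def
    using exists_admissible[OF continuous_on_subset[OF assms(1)] assms(2)] by (rule someI_ex) simp
  let ?m = "stage_resolution F a"
  have "(target F a ?m p - F p) / a \<in> {0..1}" if "p \<in> selected_points a ?m" for p
    using target_minus_bounds[OF adm assms(2) that] assms(2) by simp
  then obtain h where "continuous_on UNIV h" "\<And>x. h x \<in> {0..1}"
    "\<And>p. p \<in> selected_points a ?m \<Longrightarrow> h p = (target F a ?m p - F p) / a"
    using continuous_extension_from_finite[OF finite_selected_points,
        where v = "\<lambda>p. (target F a ?m p - F p) / a"] by blast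
  then have "\<exists>h. continuous_on UNIV h \<and> (\<forall>x. h x \<in> {0..1}) \<and>
      (\<forall>p\<in>selected_points a ?m. a * h p = target F a ?m p - F p)"
    using assms(2) by (intro exI[of _ h]) auto
  from someI_ex[OF this]
  show "continuous_on UNIV (stage_bump F a)" "stage_bump F a x \<in> {0..1}"
    "p \<in> selected_points a ?m \<Longrightarrow> a * stage_bump F a p = target F a ?m p - F p"
    unfolding stage_bump_def by blast+
qed

text \<open>The next amplitude is at most \<open>1/(8m)\<close>, so all later stages together move the limit
  by at most \<open>1/(4m)\<close>.\<close>
primrec stage :: "nat \<Rightarrow> (real \<Rightarrow> real) \<times> real" where
  "stage 0 = (\<lambda>_. 0, 1)"
| "stage (Suc j) = (case stage j of (F, a) \<Rightarrow>
     (\<lambda>x. F x + a * stage_bump F a x, min a (1 / real (stage_resolution F a)) / 8))"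

definition approx :: "nat \<Rightarrow> real \<Rightarrow> real" where "approx j = fst (stage j)"
definition amplitude :: "nat \<Rightarrow> real" where "amplitude j = snd (stage j)"
definition resolution :: "nat \<Rightarrow> nat" where "resolution j = stage_resolution (approx j) (amplitude j)"
definition bump :: "nat \<Rightarrow> real \<Rightarrow> real" where "bump j = stage_bump (approx j) (amplitude j)"

lemma approx_0: "approx 0 = (\<lambda>_. 0)" and amplitude_0: "amplitude 0 = 1"
  by (simp_all add: approx_def amplitude_def)

lemma approx_Suc: "approx (Suc j) = (\<lambda>x. approx j x + amplitude j * bump j x)"
  and amplitude_Suc: "amplitude (Suc j) = min (amplitude j) (1 / real (resolution j)) / 8"
  by (simp_all add: approx_def amplitude_def resolution_def bump_def split: prod.split)

lemma stage_invariant: "continuous_on UNIV (approx j) \<and> 0 < amplitude j \<and> amplitude j \<le> (1 / 8) ^ j"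
proof (induction j)
  case 0
  then show ?case by (simp add: approx_0 amplitude_0)
next
  case (Suc j)
  then have "admissible (approx j) (amplitude j) (resolution j)" "continuous_on UNIV (bump j)"
    using stage_resolution_bump by (auto simp: resolution_def bump_def)
  then have "2 \<le> resolution j" by (simp add: admissible_def)
  then show ?case
    using Suc \<open>continuous_on UNIV (bump j)\<close>
    by (auto simp: approx_Suc amplitude_Suc intro!: continuous_intros)
qed

lemma amplitude_pos: "0 < amplitude j"
  using stage_invariant by blast

lemma amplitude_le: "amplitude j \<le> (1 / 8) ^ j"
  using stage_invariant by blast

lemma admissible_resolution: "admissible (approx j) (amplitude j) (resolution j)"
  using stage_resolution_bump(1) stage_invariant by (simp add: resolution_def)

lemma bump_range: "bump j x \<in> {0..1}"
  using stage_resolution_bump(3) stage_invariant by (simp add: bump_def)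

lemma bump_at_selected:
  "p \<in> selected_points (amplitude j) (resolution j) \<Longrightarrow>
     approx j p + amplitude j * bump j p = target (approx j) (amplitude j) (resolution j) p"
  using stage_resolution_bump(4) stage_invariant by (simp add: bump_def resolution_def)

lemma amplitude_add_le: "amplitude (i + j) \<le> amplitude j * (1 / 8) ^ i"
proof (induction i)
  case (Suc i)
  have "amplitude (Suc (i + j)) \<le> amplitude (i + j) / 8" by (simp add: amplitude_Suc)
  with Suc show ?case by simp
qed simp

definition limit_fun :: "real \<Rightarrow> real" where
  "limit_fun x = (\<Sum>i. amplitude i * bump i x)"

lemma approx_eq_sum: "approx j x = (\<Sum>i<j. amplitude i * bump i x)"
  by (induction j) (simp_all add: approx_0 approx_Suc)

lemma bump_term_bounds: "0 \<le> amplitude i * bump i x" "amplitude i * bump i x \<le> amplitude i"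
  using amplitude_pos[of i] bump_range[of i x] by (auto intro: mult_left_le)

lemma bump_term_shift_le: "amplitude (i + j) * bump (i + j) x \<le> amplitude j * (1 / 8) ^ i"
  using bump_term_bounds(2) amplitude_add_le by (rule order.trans)

lemma summable_bump_terms: "summable (\<lambda>i. amplitude (i + j) * bump (i + j) x)"
proof (rule summable_comparison_test)
  show "\<exists>N. \<forall>n\<ge>N. norm (amplitude (n + j) * bump (n + j) x) \<le> amplitude j * (1 / 8) ^ n"
    using bump_term_bounds(1) bump_term_shift_le by simp
qed (intro summable_mult summable_geometric, simp)

lemma limit_fun_tail_bounds: "approx j x \<le> limit_fun x" "limit_fun x \<le> approx j x + 2 * amplitude j"
proof -
  let ?tail = "\<Sum>i. amplitude (i + j) * bump (i + j) x"
  have "limit_fun x = ?tail + approx j x"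
    unfolding limit_fun_def approx_eq_sum
    by (rule suminf_split_initial_segment) (use summable_bump_terms[of 0 x] in simp)
  moreover have "0 \<le> ?tail"
    using summable_bump_terms bump_term_bounds(1) by (rule suminf_nonneg)
  moreover have "?tail \<le> (\<Sum>i. amplitude j * (1 / 8) ^ i)"
    using bump_term_shift_le summable_bump_terms
    by (rule suminf_le) (simp add: summable_mult summable_geometric)
  moreover have "(\<Sum>i. amplitude j * (1 / 8 :: real) ^ i) = amplitude j * (8 / 7)"
  proof -
    have "(\<lambda>i. (1 / 8 :: real) ^ i) sums (1 / (1 - 1 / 8))"
      by (rule geometric_sums) simp
    from sums_mult[OF this, of "amplitude j"] show ?thesis by (simp add: sums_iff)
  qed
  ultimately show "approx j x \<le> limit_fun x" "limit_fun x \<le> approx j x + 2 * amplitude j"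
    using amplitude_pos[of j] by linarith+
qed

lemma continuous_limit_fun: "continuous_on UNIV limit_fun"
proof -
  have "uniform_limit UNIV (\<lambda>n x. \<Sum>i<n. amplitude i * bump i x) limit_fun sequentially"
    unfolding limit_fun_def
    using bump_term_shift_le[of _ 0] bump_term_bounds(1) amplitude_0
    by (intro Weierstrass_m_test[where M = "\<lambda>i. (1 / 8) ^ i"] summable_geometric) auto
  moreover have "continuous_on UNIV (\<lambda>x. \<Sum>i<n. amplitude i * bump i x)" for n
    using stage_invariant[of n] by (simp add: approx_eq_sum[symmetric])
  ultimately show ?thesis
    by (intro uniform_limit_theorem[of _ "\<lambda>n x. \<Sum>i<n. amplitude i * bump i x"]) auto
qed

lemma uniformly_continuous_limit_fun: "uniformly_continuous_on X limit_fun"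
proof -
  have "uniformly_continuous_on {0..1} limit_fun"
    by (rule compact_uniformly_continuous[OF continuous_on_subset[OF continuous_limit_fun]]) auto
  then show ?thesis using X_subset by (rule uniformly_continuous_on_subset)
qed

lemma powr_le_grid_count_resolution:
  "ereal (real (resolution j) powr (s - \<epsilon>)) \<le> grid_count (1 / real (resolution j)) (graph_on X limit_fun)"
proof (rule powr_le_grid_count[OF admissible_resolution amplitude_pos])
  have "(1 / 8 :: real) ^ j \<le> 1" by (rule power_le_one) auto
  then show "amplitude j \<le> 1" using amplitude_le[of j] by linarith
  fix p assume "p \<in> selected_points (amplitude j) (resolution j)"
  then have "approx (Suc j) p = target (approx j) (amplitude j) (resolution j) p"
    by (simp add: approx_Suc bump_at_selected)
  moreover have "2 * amplitude (Suc j) \<le> 1 / (4 * real (resolution j))"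
    by (simp add: amplitude_Suc)
  ultimately show "target (approx j) (amplitude j) (resolution j) p \<le> limit_fun p \<and>
      limit_fun p \<le> target (approx j) (amplitude j) (resolution j) p + 1 / (4 * real (resolution j))"
    using limit_fun_tail_bounds[where j = "Suc j" and x = p] by linarith
qed

lemma upper_box_dim_graph_limit_fun_ge: "ereal (s - \<epsilon>) \<le> upper_box_dim (graph_on X limit_fun)"
  unfolding upper_box_dim_def
proof (rule Limsup_greatest)
  let ?N = "\<lambda>\<delta>. grid_count \<delta> (graph_on X limit_fun)"
  fix P assume "eventually P (at_right (0::real))"
  then obtain c where c: "0 < c" "\<And>\<delta>. 0 < \<delta> \<Longrightarrow> \<delta> < c \<Longrightarrow> P \<delta>"
    unfolding eventually_at_right_field by auto
  obtain j where j: "(1 / 8 :: real) ^ j < c"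
    using real_arch_pow_inv[of c "1 / 8"] c(1) by auto
  define m where "m = resolution j"
  have "2 \<le> m" "12 \<le> amplitude j * real m"
    using admissible_resolution[of j] by (auto simp: admissible_def m_def)
  then have "1 / real m < amplitude j"
    using amplitude_pos[of j] by (simp add: field_simps)
  then have "1 / real m < c" using amplitude_le[of j] j by linarith
  then have "P (1 / real m)" using \<open>2 \<le> m\<close> by (intro c(2)) auto
  have "ereal (real m powr (s - \<epsilon>)) \<le> ?N (1 / real m)"
    using powr_le_grid_count_resolution[of j] by (simp add: m_def)
  moreover have "0 \<le> ?N (1 / real m)" by (simp add: grid_count_eq_ecard ecard_def)
  ultimately have "ereal (s - \<epsilon>) \<le> eln (?N (1 / real m)) / ereal (ln (real m))"
    using le_eln_div_ln_iff[of "real m" "?N (1 / real m)" "s - \<epsilon>"] \<open>2 \<le> m\<close> by simp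
  also have "ln (real m) = - ln (1 / real m)" using \<open>2 \<le> m\<close> by (simp add: ln_div)
  also have "eln (?N (1 / real m)) / ereal (- ln (1 / real m)) \<le>
      (SUP \<delta>\<in>Collect P. eln (?N \<delta>) / ereal (- ln \<delta>))"
    using \<open>P (1 / real m)\<close> by (intro SUP_upper) simp
  finally show "ereal (s - \<epsilon>) \<le> (SUP \<delta>\<in>Collect P. eln (?N \<delta>) / ereal (- ln \<delta>))" .
qed

end

lemma Limsup_g_le_upper_graph_box_dim:
  assumes "X \<subseteq> {0..1}"
  shows "Limsup sequentially (\<lambda>m. eln (g_count X m) / ereal (ln (real m))) \<le> upper_graph_box_dim X"
    (is "?L \<le> ?G")
proof (rule dense_le)
  fix y assume "y < ?L"
  then obtain z where z: "y < z" "z < ?L" using dense by blast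
  show "y \<le> ?G"
  proof (cases y)
    case (real t)
    with z obtain s where "t < s" "ereal s < ?L" by (cases z) auto
    then interpret graph_construction X s "s - t"
      using assms frequently_powr_le_g_real by unfold_locales auto
    have "ereal t \<le> upper_box_dim (graph_on X limit_fun)"
      using upper_box_dim_graph_limit_fun_ge by simp
    also have "\<dots> \<le> ?G"
      unfolding upper_graph_box_dim_def using uniformly_continuous_limit_fun by (intro SUP_upper) simp
    finally show ?thesis using real by simp
  qed (use \<open>y < ?L\<close> in auto)
qed

theorem theorem1:
  fixes X :: "real set"
  assumes "X \<subseteq> {0..1}"
  shows "upper_graph_box_dim X =
         Limsup sequentially (\<lambda>m. eln (g_count X m) / ereal (ln (real m)))"
proof (rule antisym)
  show "upper_graph_box_dim X \<le> Limsup sequentially (\<lambda>m. eln (g_count X m) / ereal (ln (real m)))"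
    unfolding upper_graph_box_dim_def
    using upper_box_dim_graph_le_Limsup_g[OF assms] by (intro SUP_least) simp
qed (rule Limsup_g_le_upper_graph_box_dim[OF assms])

end
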